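(* Let $n,m\ge 1$, let $A_1,\ldots,A_m$ be real symmetric $n\times n$ matrices and $a_1,\ldots,a_m\in\mathbb{R}^n$, and define $f:\mathbb{R}^n\to\mathbb{R}^m$ by $f(x)=(f_1(x),\ldots,f_m(x))$ with $f_i(x)=\frac12 x^TA_ix+a_i^Tx$. Let $A=[a_1~\ldots~a_m]\in\mathbb{R}^{n\times m}$ and set $$L:=\sqrt{\sum_{i=1}^m\|A_i\|^2},\qquad L_{\rm new}:=\sqrt{\lambda_{\max}\Big(\sum_{i=1}^mA_i^TA_i\Big)},\qquad \nu:=\sigma_{\min}(A)=\sqrt{\lambda_{\min}(A^TA)},$$ where $\|A_i\|=\sqrt{\lambda_{\max}(A_i^TA_i)}$ is the spectral norm. Assume $L_{\rm new}>0$. Then $L_{\rm new}\le L$, and for every $\epsilon<\epsilon^*_{\rm new}:=\nu/(2L_{\rm new})$ the set $$F_m(\epsilon)=\{f(x):~x\in\mathbb{R}^n,~\|x\|\le\epsilon\}$$ is a convex subset of $\mathbb{R}^m$.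
   Context: $\|\cdot\|$ on vectors is the Euclidean norm. $\lambda_{\max},\lambda_{\min}$ denote the largest and smallest eigenvalue of a symmetric matrix, and $\sigma_{\min}(A)$ denotes the smallest singular value of $A$, defined as $\sqrt{\lambda_{\min}(A^TA)}$. *)

theory Defs
  imports "HOL-Analysis.Analysis"
begin

definition eigenvalues :: "real^'n^'n \<Rightarrow> real set" where
  "eigenvalues M = {l. \<exists>v. v \<noteq> 0 \<and> M *v v = l *\<^sub>R v}"

text \<open>Largest / smallest eigenvalue (used for symmetric matrices only,
  where the eigenvalue set is finite and nonempty).\<close>
definition lambda_max :: "real^'n^'n \<Rightarrow> real" where
  "lambda_max M = Max (eigenvalues M)"

definition lambda_min :: "real^'n^'n \<Rightarrow> real" where
  "lambda_min M = Min (eigenvalues M)"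

definition spec_norm :: "real^'n^'n \<Rightarrow> real" where
  "spec_norm M = sqrt (lambda_max (transpose M ** M))"

definition sigma_min :: "real^'m^'n \<Rightarrow> real" where
  "sigma_min A = sqrt (lambda_min (transpose A ** A))"

definition symmetric_mat :: "real^'n^'n \<Rightarrow> bool" where
  "symmetric_mat M \<longleftrightarrow> transpose M = M"

end

theory Submission
  imports Defs
begin

text \<open>
  Put \<open>z = u x\<^sub>1 + w x\<^sub>2\<close> for a convex combination of two points of the ball. Then
  \<open>u f(x\<^sub>1) + w f(x\<^sub>2) - f(z) = u w q(x\<^sub>1 - x\<^sub>2)\<close> with \<open>q\<close> the purely quadratic part of \<open>f\<close>,
  of norm at most \<open>L u w |x\<^sub>1 - x\<^sub>2|\<^sup>2 / 2\<close>, while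
  \<open>|z|\<^sup>2 = u |x\<^sub>1|\<^sup>2 + w |x\<^sub>2|\<^sup>2 - u w |x\<^sub>1 - x\<^sub>2|\<^sup>2\<close> leaves a margin of the same order inside
  the ball. Values this close to \<open>f(z)\<close> are attained: on the ball of radius \<open>\<epsilon>\<close> the Jacobian
  of \<open>f\<close> has all singular values at least \<open>\<nu> - L \<epsilon>\<close>, so a minimiser of
  \<open>|f x - y| + (\<nu> - L \<epsilon>) |x - z|\<close> over the ball lies in its interior, and there a Newton step
  towards \<open>y\<close> would decrease the functional unless \<open>f x = y\<close>. The spectral quantities enter
  only through the Rayleigh bounds \<open>\<Sum>\<^sub>i |Q\<^sub>i h|\<^sup>2 \<le> L_new\<^sup>2 |h|\<^sup>2\<close> and \<open>|A w| \<ge> \<nu> |w|\<close>.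
\<close>

section \<open>Matrix norm bounds\<close>

lemma symmetric_mat_inner_commute:
  fixes M :: "real^'n^'n"
  assumes "symmetric_mat M"
  shows "x \<bullet> (M *v y) = (M *v x) \<bullet> y"
proof -
  have "x \<bullet> (M *v y) = (x v* M) \<bullet> y" by (simp add: dot_lmul_matrix)
  also have "x v* M = transpose M *v x" by simp
  also have "\<dots> = M *v x" using assms by (simp add: symmetric_mat_def)
  finally show ?thesis .
qed

lemma symmetric_mat_transpose_mult_self: "symmetric_mat (transpose Q ** (Q::real^'a^'b))"
  by (simp add: symmetric_mat_def matrix_transpose_mul)

lemma symmetric_mat_sum:
  assumes "\<And>i. i \<in> I \<Longrightarrow> symmetric_mat (M i :: real^'n^'n)"
  shows "symmetric_mat (\<Sum>i\<in>I. M i)"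
proof -
  have "transpose (M i) $ r $ c = M i $ r $ c" if "i \<in> I" for i r c
    using assms[OF that] by (simp add: symmetric_mat_def)
  then show ?thesis
    by (simp add: symmetric_mat_def transpose_def vec_eq_iff sum_component)
qed

lemma symmetric_mat_diff_scaleR_mat:
  assumes "symmetric_mat (M :: real^'n^'n)"
  shows "symmetric_mat (M - c *\<^sub>R mat 1)"
  using assms by (simp add: symmetric_mat_def transpose_def mat_def vec_eq_iff)

lemma matrix_vector_mult_sum: "(\<Sum>i\<in>I. M i) *v x = (\<Sum>i\<in>I. M i *v x)"
  by (induction I rule: infinite_finite_induct) (auto simp: matrix_vector_mult_add_rdistrib)

lemma inner_transpose_mult_self:
  fixes Q :: "real^'a^'b"
  shows "x \<bullet> ((transpose Q ** Q) *v x) = (norm (Q *v x))\<^sup>2"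
proof -
  have "x \<bullet> ((transpose Q ** Q) *v x) = x \<bullet> (transpose Q *v (Q *v x))"
    by (simp add: matrix_vector_mul_assoc)
  also have "\<dots> = (Q *v x) \<bullet> (Q *v x)"
    using dot_lmul_matrix[of "Q *v x" Q x] by (simp add: inner_commute[of x])
  finally show ?thesis by (simp add: power2_norm_eq_inner)
qed

lemma symmetric_quadratic_form_add:
  fixes M :: "real^'n^'n"
  assumes "symmetric_mat M"
  shows "(x + v) \<bullet> (M *v (x + v)) = x \<bullet> (M *v x) + 2 * ((M *v x) \<bullet> v) + v \<bullet> (M *v v)"
  using symmetric_mat_inner_commute[OF assms, of x v] inner_commute[of v "M *v x"]
  by (simp add: matrix_vector_right_distrib inner_add_left inner_add_right)

lemma psd_quadratic_form_eq_0_imp_null: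
  fixes B :: "real^'n^'n"
  assumes sym: "symmetric_mat B" and psd: "\<And>x. 0 \<le> x \<bullet> (B *v x)"
    and zero: "x \<bullet> (B *v x) = 0"
  shows "B *v x = 0"
proof (rule ccontr)
  define w where "w = B *v x"
  define b where "b = w \<bullet> (B *v w)"
  assume "B *v x \<noteq> 0"
  then have w_pos: "0 < w \<bullet> w" by (simp add: w_def)
  have along_w: "t * (2 * (w \<bullet> w)) \<le> t * (t * b)" for t
    using psd[of "x + (- t) *\<^sub>R w"] zero symmetric_mat_inner_commute[OF sym, of x w]
    by (simp add: symmetric_quadratic_form_add[OF sym] matrix_vector_mult_scaleR b_def
        w_def[symmetric] power2_eq_square algebra_simps)
  have "2 * (w \<bullet> w) \<le> t * b" if "t > 0" for t
    using mult_left_le_imp_le[OF along_w that] .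
  from this[of "(w \<bullet> w) / (b + 1)"] have "2 * (w \<bullet> w) \<le> (w \<bullet> w) / (b + 1) * b"
    using w_pos psd[of w] by (simp add: b_def add_nonneg_pos)
  moreover have "(w \<bullet> w) / (b + 1) * b < w \<bullet> w"
    using w_pos psd[of w] by (simp add: b_def field_simps)
  ultimately show False using w_pos by linarith
qed

lemma eigenvalue_unit_eigenvector:
  fixes M :: "real^'n^'n"
  assumes "l \<in> eigenvalues M"
  obtains v where "v \<bullet> v = 1" "M *v v = l *\<^sub>R v"
proof -
  obtain v where v: "v \<noteq> 0" "M *v v = l *\<^sub>R v" using assms by (auto simp: eigenvalues_def)
  define u where "u = (1 / norm v) *\<^sub>R v"
  have "u \<bullet> u = 1" using v by (simp add: u_def dot_square_norm)
  moreover have "M *v u = l *\<^sub>R u" using v by (simp add: u_def matrix_vector_mult_scaleR)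
  ultimately show ?thesis using that by blast
qed

lemma rayleigh_minimum_is_eigenvalue:
  fixes M :: "real^'n^'n"
  assumes sym: "symmetric_mat M"
  obtains c where "c \<in> eigenvalues M" "\<And>x. c * (x \<bullet> x) \<le> x \<bullet> (M *v x)"
proof -
  obtain b :: "real^'n" where "b \<in> Basis" using nonempty_Basis by blast
  then have "b \<in> sphere 0 1" by (simp add: norm_Basis)
  moreover have "continuous_on (sphere 0 1) (\<lambda>x::real^'n. x \<bullet> (M *v x))"
    by (intro continuous_intros)
  ultimately obtain x0 where "x0 \<in> sphere 0 1"
    and min: "\<And>y. y \<in> sphere 0 1 \<Longrightarrow> x0 \<bullet> (M *v x0) \<le> y \<bullet> (M *v y)"
    using continuous_attains_inf[OF compact_sphere] by blast
  then have x0: "norm x0 = 1" by simp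
  define c where "c = x0 \<bullet> (M *v x0)"
  have rayleigh: "c * (x \<bullet> x) \<le> x \<bullet> (M *v x)" for x
  proof (cases "x = 0")
    case False
    define u where "u = (1 / norm x) *\<^sub>R x"
    have "c \<le> u \<bullet> (M *v u)" using False min[of u] by (simp add: c_def u_def)
    also have "u \<bullet> (M *v u) = (x \<bullet> (M *v x)) / (norm x)\<^sup>2"
      by (simp add: u_def matrix_vector_mult_scaleR power2_eq_square)
    finally show ?thesis using False by (simp add: field_simps dot_square_norm)
  qed simp
  define B where "B = M - c *\<^sub>R mat 1"
  have B_mult: "B *v x = M *v x - c *\<^sub>R x" for x
    by (simp add: B_def matrix_vector_mult_diff_rdistrib scaleR_matrix_vector_assoc[symmetric])
  have "B *v x0 = 0"
  proof (rule psd_quadratic_form_eq_0_imp_null)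
    show "symmetric_mat B" unfolding B_def by (rule symmetric_mat_diff_scaleR_mat[OF sym])
    show "0 \<le> x \<bullet> (B *v x)" for x
      using rayleigh[of x] by (simp add: B_mult inner_diff_right)
    show "x0 \<bullet> (B *v x0) = 0"
      using x0 by (simp add: B_mult inner_diff_right c_def dot_square_norm)
  qed
  then have "c \<in> eigenvalues M"
    using x0 by (auto simp: eigenvalues_def B_mult intro!: exI[of _ x0])
  with rayleigh that show ?thesis by blast
qed

lemma finite_eigenvalues_symmetric:
  fixes M :: "real^'n^'n"
  assumes sym: "symmetric_mat M"
  shows "finite (eigenvalues M)"
proof -
  define ev where "ev l = (SOME v. v \<noteq> 0 \<and> M *v v = l *\<^sub>R v)" for l
  have ev: "ev l \<noteq> 0" "M *v ev l = l *\<^sub>R ev l" if "l \<in> eigenvalues M" for l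
    using someI_ex[of "\<lambda>v. v \<noteq> 0 \<and> M *v v = l *\<^sub>R v"] that
    by (auto simp: ev_def eigenvalues_def)
  have "inj_on ev (eigenvalues M)"
    by (rule inj_onI) (metis ev scaleR_cancel_right)
  moreover have "independent (ev ` eigenvalues M)"
  proof (rule pairwise_orthogonal_independent)
    show "pairwise orthogonal (ev ` eigenvalues M)"
    proof (rule pairwiseI, clarify)
      fix l1 l2 assume l: "l1 \<in> eigenvalues M" "l2 \<in> eigenvalues M" "ev l1 \<noteq> ev l2"
      have "l2 * (ev l1 \<bullet> ev l2) = l1 * (ev l1 \<bullet> ev l2)"
        using symmetric_mat_inner_commute[OF sym, of "ev l1" "ev l2"] ev[OF l(1)] ev[OF l(2)]
        by simp
      moreover have "l1 \<noteq> l2" using l by auto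
      ultimately show "orthogonal (ev l1) (ev l2)" by (simp add: orthogonal_def)
    qed
    show "0 \<notin> ev ` eigenvalues M" using ev by force
  qed
  then have "finite (ev ` eigenvalues M)" using independent_bound by blast
  ultimately show ?thesis using finite_imageD by blast
qed

lemma quadratic_form_lower_bound_le_eigenvalue:
  fixes M :: "real^'n^'n"
  assumes "\<And>x. c * (x \<bullet> x) \<le> x \<bullet> (M *v x)" and "l \<in> eigenvalues M"
  shows "c \<le> l"
proof -
  obtain v where "v \<bullet> v = 1" "M *v v = l *\<^sub>R v"
    using assms(2) by (rule eigenvalue_unit_eigenvector)
  then show ?thesis using assms(1)[of v] by simp
qed

lemma lambda_min_symmetric:
  fixes M :: "real^'n^'n"
  assumes sym: "symmetric_mat M"
  shows "lambda_min M \<in> eigenvalues M" and "lambda_min M * (x \<bullet> x) \<le> x \<bullet> (M *v x)"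
proof -
  obtain c where c: "c \<in> eigenvalues M" and ge: "\<And>x. c * (x \<bullet> x) \<le> x \<bullet> (M *v x)"
    using rayleigh_minimum_is_eigenvalue[OF sym] by blast
  have "lambda_min M = c"
    unfolding lambda_min_def
    by (rule Min_eqI[OF finite_eigenvalues_symmetric[OF sym]
          quadratic_form_lower_bound_le_eigenvalue[OF ge] c])
  with c ge show "lambda_min M \<in> eigenvalues M" "lambda_min M * (x \<bullet> x) \<le> x \<bullet> (M *v x)"
    by auto
qed

lemma lambda_max_symmetric:
  fixes M :: "real^'n^'n"
  assumes sym: "symmetric_mat M"
  shows "lambda_max M \<in> eigenvalues M" and "x \<bullet> (M *v x) \<le> lambda_max M * (x \<bullet> x)"
proof -
  have neg: "(- M) *v x = - (M *v x)" for x
    by (simp add: matrix_vector_mult_def vec_eq_iff sum_negf)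
  have "symmetric_mat (- M)"
    using sym by (simp add: symmetric_mat_def transpose_def vec_eq_iff)
  then obtain c where c: "c \<in> eigenvalues (- M)" and ge: "\<And>x. c * (x \<bullet> x) \<le> x \<bullet> ((- M) *v x)"
    using rayleigh_minimum_is_eigenvalue by blast
  have c': "- c \<in> eigenvalues M"
    using c by (auto simp: eigenvalues_def neg) (metis minus_equation_iff scaleR_minus_left)
  have le: "x \<bullet> (M *v x) \<le> (- c) * (x \<bullet> x)" for x
    using ge[of x] by (simp add: neg)
  have "l \<le> - c" if "l \<in> eigenvalues M" for l
    using quadratic_form_lower_bound_le_eigenvalue[of c "- M" "- l"] ge that
    by (auto simp: eigenvalues_def neg)
  then have "lambda_max M = - c"
    unfolding lambda_max_def by (rule Max_eqI[OF finite_eigenvalues_symmetric[OF sym] _ c'])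
  with c' le show "lambda_max M \<in> eigenvalues M" "x \<bullet> (M *v x) \<le> lambda_max M * (x \<bullet> x)"
    by auto
qed

lemma eigenvalue_transpose_mult_self_nonneg:
  fixes Q :: "real^'a^'b"
  assumes "l \<in> eigenvalues (transpose Q ** Q)"
  shows "0 \<le> l"
proof -
  obtain v where "v \<bullet> v = 1" "(transpose Q ** Q) *v v = l *\<^sub>R v"
    using assms by (rule eigenvalue_unit_eigenvector)
  then have "l = (norm (Q *v v))\<^sup>2"
    using inner_transpose_mult_self[of v Q] by simp
  then show ?thesis by simp
qed

lemma norm_mult_le_spec_norm:
  fixes M :: "real^'n^'n"
  shows "norm (M *v x) \<le> spec_norm M * norm x"
proof -
  let ?l = "lambda_max (transpose M ** M)"
  have "0 \<le> ?l"
    by (rule eigenvalue_transpose_mult_self_nonneg)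
      (rule lambda_max_symmetric(1)[OF symmetric_mat_transpose_mult_self])
  then have "(spec_norm M * norm x)\<^sup>2 = ?l * (norm x)\<^sup>2"
    by (simp add: spec_norm_def power_mult_distrib)
  moreover have "(norm (M *v x))\<^sup>2 \<le> ?l * (norm x)\<^sup>2"
    using lambda_max_symmetric(2)[OF symmetric_mat_transpose_mult_self, of x M]
    by (simp only: inner_transpose_mult_self dot_square_norm)
  ultimately have "(norm (M *v x))\<^sup>2 \<le> (spec_norm M * norm x)\<^sup>2" by linarith
  then show ?thesis
    by (rule power2_le_imp_le) (simp add: spec_norm_def \<open>0 \<le> ?l\<close>)
qed

lemma sigma_min_mult_le_norm:
  fixes A :: "real^'m^'n"
  shows "sigma_min A * norm x \<le> norm (A *v x)"
proof -
  let ?l = "lambda_min (transpose A ** A)"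
  have "0 \<le> ?l"
    by (rule eigenvalue_transpose_mult_self_nonneg)
      (rule lambda_min_symmetric(1)[OF symmetric_mat_transpose_mult_self])
  then have "(sigma_min A * norm x)\<^sup>2 = ?l * (norm x)\<^sup>2"
    by (simp add: sigma_min_def power_mult_distrib)
  moreover have "?l * (norm x)\<^sup>2 \<le> (norm (A *v x))\<^sup>2"
    using lambda_min_symmetric(2)[OF symmetric_mat_transpose_mult_self, of A x]
    by (simp only: inner_transpose_mult_self dot_square_norm)
  ultimately have "(sigma_min A * norm x)\<^sup>2 \<le> (norm (A *v x))\<^sup>2" by linarith
  then show ?thesis by (rule power2_le_imp_le) simp
qed

lemma inner_sum_transpose_mult_self:
  fixes Q :: "'i \<Rightarrow> real^'a^'b"
  shows "x \<bullet> ((\<Sum>i\<in>I. transpose (Q i) ** Q i) *v x) = (\<Sum>i\<in>I. (norm (Q i *v x))\<^sup>2)"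
  by (simp only: matrix_vector_mult_sum inner_sum_right inner_transpose_mult_self)

lemma symmetric_mat_sum_transpose_mult_self:
  "symmetric_mat (\<Sum>i\<in>I. transpose (Q i) ** (Q i :: real^'n^'b))"
  by (rule symmetric_mat_sum) (rule symmetric_mat_transpose_mult_self)

lemma sum_norm_mult_le_lambda_max:
  fixes Q :: "'i \<Rightarrow> real^'n^'n"
  shows "(\<Sum>i\<in>I. (norm (Q i *v x))\<^sup>2) \<le> lambda_max (\<Sum>i\<in>I. transpose (Q i) ** Q i) * (norm x)\<^sup>2"
  using lambda_max_symmetric(2)[OF symmetric_mat_sum_transpose_mult_self, of x Q I]
  by (simp only: inner_sum_transpose_mult_self dot_square_norm)

lemma lambda_max_sum_transpose_mult_le:
  fixes Q :: "'i \<Rightarrow> real^'n^'n"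
  shows "lambda_max (\<Sum>i\<in>I. transpose (Q i) ** Q i) \<le> (\<Sum>i\<in>I. (spec_norm (Q i))\<^sup>2)"
proof -
  let ?S = "\<Sum>i\<in>I. transpose (Q i) ** Q i"
  obtain v where v: "v \<bullet> v = 1" "?S *v v = lambda_max ?S *\<^sub>R v"
    using lambda_max_symmetric(1)[OF symmetric_mat_sum_transpose_mult_self]
    by (rule eigenvalue_unit_eigenvector)
  then have "norm v = 1" by (simp add: norm_eq_1)
  have "lambda_max ?S = v \<bullet> (?S *v v)" using v by simp
  also have "\<dots> = (\<Sum>i\<in>I. (norm (Q i *v v))\<^sup>2)" by (rule inner_sum_transpose_mult_self)
  also have "\<dots> \<le> (\<Sum>i\<in>I. (spec_norm (Q i))\<^sup>2)"
  proof (rule sum_mono)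
    fix i
    have "norm (Q i *v v) \<le> spec_norm (Q i)"
      using norm_mult_le_spec_norm[of "Q i" v] \<open>norm v = 1\<close> by simp
    then show "(norm (Q i *v v))\<^sup>2 \<le> (spec_norm (Q i))\<^sup>2"
      by (rule power_mono) simp
  qed
  finally show ?thesis .
qed

lemma bounded_right_inverse_if_transpose_bounded_below:
  fixes J :: "real^'n^'m"
  assumes mu: "0 < \<mu>" and below: "\<And>w. \<mu> * norm w \<le> norm (transpose J *v w)"
  obtains v where "J *v v = r" and "\<mu> * norm v \<le> norm r"
proof -
  have adjoint: "v \<bullet> (transpose J *v w) = (J *v v) \<bullet> w" for v w
    using dot_lmul_matrix[of w J v] by (simp add: inner_commute)
  define G where "G = J ** transpose J"
  have "inj ((*v) G)"
  proof (rule linear_inj_on_iff_eq_0[THEN iffD2, OF matrix_vector_mul_linear], safe)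
    fix w assume "G *v w = 0"
    then have "norm (transpose J *v w) = 0"
      using inner_transpose_mult_self[of w "transpose J"] by (simp add: G_def)
    then show "w = 0" using below[of w] mu by (simp add: mult_le_0_iff)
  qed (rule subspace_UNIV)
  then have "surj ((*v) G)"
    by (simp add: linear_injective_imp_surjective matrix_vector_mul_linear)
  then obtain w where w: "G *v w = r" by (metis surjD)
  define v where "v = transpose J *v w"
  have Jv: "J *v v = r"
    using w unfolding G_def v_def by (simp only: matrix_vector_mul_assoc)
  have "(norm v)\<^sup>2 = r \<bullet> w" using adjoint[of v w] Jv by (simp add: v_def dot_square_norm)
  also have "\<dots> \<le> norm r * norm w" by (rule norm_cauchy_schwarz)
  finally have "\<mu> * (norm v)\<^sup>2 \<le> norm r * (\<mu> * norm w)"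
    using mu by (simp add: mult_left_mono algebra_simps)
  also have "\<dots> \<le> norm r * norm v" using below[of w] by (simp add: v_def mult_left_mono)
  finally have "\<mu> * norm v \<le> norm r"
    by (cases "v = 0") (simp_all add: power2_eq_square)
  with Jv that show ?thesis by blast
qed

lemma norm_sum_scaleR_le:
  fixes y :: "'m::finite \<Rightarrow> 'a::real_normed_vector"
  shows "norm (\<Sum>i\<in>UNIV. w $ i *\<^sub>R y i) \<le> norm w * sqrt (\<Sum>i\<in>UNIV. (norm (y i))\<^sup>2)"
proof -
  have "norm (\<Sum>i\<in>UNIV. w $ i *\<^sub>R y i) \<le> (\<Sum>i\<in>UNIV. \<bar>w $ i\<bar> * norm (y i))"
    by (rule norm_sum[THEN order_trans]) simp
  also have "\<dots> \<le> sqrt (\<Sum>i\<in>UNIV. \<bar>w $ i\<bar>\<^sup>2) * sqrt (\<Sum>i\<in>UNIV. (norm (y i))\<^sup>2)"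
  proof (rule power2_le_imp_le)
    show "(\<Sum>i\<in>UNIV. \<bar>w $ i\<bar> * norm (y i))\<^sup>2
        \<le> (sqrt (\<Sum>i\<in>UNIV. \<bar>w $ i\<bar>\<^sup>2) * sqrt (\<Sum>i\<in>UNIV. (norm (y i))\<^sup>2))\<^sup>2"
      using Cauchy_Schwarz_ineq_sum[of "\<lambda>i. \<bar>w $ i\<bar>" "\<lambda>i. norm (y i)" UNIV]
      by (simp add: power_mult_distrib sum_nonneg)
  qed (simp add: sum_nonneg)
  also have "sqrt (\<Sum>i\<in>UNIV. \<bar>w $ i\<bar>\<^sup>2) = norm w"
    by (simp add: norm_vec_def L2_set_def)
  finally show ?thesis .
qed

section \<open>Quadratic maps\<close>

definition quad_map :: "('m::finite \<Rightarrow> real^'n^'n) \<Rightarrow> ('m \<Rightarrow> real^'n) \<Rightarrow> real^'n \<Rightarrow> real^'m"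
  where "quad_map Q a x = (\<chi> i. (1/2) * (x \<bullet> (Q i *v x)) + a i \<bullet> x)"

definition quad_jacobian :: "('m::finite \<Rightarrow> real^'n^'n) \<Rightarrow> ('m \<Rightarrow> real^'n) \<Rightarrow> real^'n \<Rightarrow> real^'n^'m"
  where "quad_jacobian Q a x = (\<chi> i j. (Q i *v x + a i) $ j)"

lemma quad_jacobian_mult: "(quad_jacobian Q a x *v v) $ i = (Q i *v x + a i) \<bullet> v"
  by (simp add: quad_jacobian_def matrix_vector_mult_def inner_vec_def)

lemma transpose_quad_jacobian_mult:
  "transpose (quad_jacobian Q a x) *v w = (\<Sum>i\<in>UNIV. w $ i *\<^sub>R (Q i *v x + a i))"
  by (simp add: quad_jacobian_def transpose_def matrix_vector_mult_def vec_eq_iff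
      sum_component mult.commute)

lemma quad_map_add:
  assumes "\<And>i. symmetric_mat (Q i)"
  shows "quad_map Q a (x + v) = quad_map Q a x + quad_jacobian Q a x *v v + quad_map Q (\<lambda>_. 0) v"
proof -
  have "x \<bullet> (Q i *v v) = v \<bullet> (Q i *v x)" for i
    using symmetric_mat_inner_commute[OF assms] by (simp add: inner_commute)
  then show ?thesis
    by (simp add: vec_eq_iff quad_map_def quad_jacobian_mult matrix_vector_right_distrib
        inner_add_left inner_add_right inner_commute algebra_simps)
qed

lemma quad_map_homogeneous_scaleR:
  "quad_map Q (\<lambda>_. 0) (t *\<^sub>R v) = t\<^sup>2 *\<^sub>R quad_map Q (\<lambda>_. 0) v"
  by (simp add: vec_eq_iff quad_map_def matrix_vector_mult_scaleR power2_eq_square)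

lemma continuous_on_quad_map: "continuous_on S (quad_map Q a)"
  unfolding quad_map_def by (intro continuous_intros)

lemma norm_quad_map_homogeneous_le:
  assumes bound: "\<And>h. (\<Sum>i\<in>UNIV. (norm (Q i *v h))\<^sup>2) \<le> L\<^sup>2 * (norm h)\<^sup>2" and "0 \<le> L"
  shows "norm (quad_map Q (\<lambda>_. 0) v) \<le> L / 2 * (norm v)\<^sup>2"
proof (rule power2_le_imp_le)
  have "(norm (quad_map Q (\<lambda>_. 0) v))\<^sup>2 = (\<Sum>i\<in>UNIV. (v \<bullet> (Q i *v v))\<^sup>2) / 4"
    by (simp add: quad_map_def norm_vec_def L2_set_def power_divide sum_divide_distrib sum_nonneg)
  also have "\<dots> \<le> (\<Sum>i\<in>UNIV. (norm v)\<^sup>2 * (norm (Q i *v v))\<^sup>2) / 4"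
  proof (intro divide_right_mono sum_mono)
    fix i
    have "\<bar>v \<bullet> (Q i *v v)\<bar>\<^sup>2 \<le> (norm v * norm (Q i *v v))\<^sup>2"
      by (rule power_mono[OF Cauchy_Schwarz_ineq2]) simp
    then show "(v \<bullet> (Q i *v v))\<^sup>2 \<le> (norm v)\<^sup>2 * (norm (Q i *v v))\<^sup>2"
      by (simp add: power_mult_distrib)
  qed simp
  also have "\<dots> \<le> (norm v)\<^sup>2 * (L\<^sup>2 * (norm v)\<^sup>2) / 4"
    using bound[of v] by (simp add: sum_distrib_left[symmetric] mult_left_mono)
  also have "\<dots> = (L / 2 * (norm v)\<^sup>2)\<^sup>2"
    by (simp add: power2_eq_square)
  finally show "(norm (quad_map Q (\<lambda>_. 0) v))\<^sup>2 \<le> (L / 2 * (norm v)\<^sup>2)\<^sup>2" .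
qed (simp add: \<open>0 \<le> L\<close>)

lemma quad_map_convex_combination:
  assumes sym: "\<And>i. symmetric_mat (Q i)" and uw: "u + w = 1"
  shows "u *\<^sub>R quad_map Q a x1 + w *\<^sub>R quad_map Q a x2
    = quad_map Q a (u *\<^sub>R x1 + w *\<^sub>R x2) + (u * w) *\<^sub>R quad_map Q (\<lambda>_. 0) (x1 - x2)"
proof -
  define z where "z = u *\<^sub>R x1 + w *\<^sub>R x2"
  define d where "d = x1 - x2"
  define J where "J = quad_jacobian Q a z *v d"
  define q where "q = quad_map Q (\<lambda>_. 0) d"
  have expand: "quad_map Q a (z + t *\<^sub>R d) = quad_map Q a z + t *\<^sub>R J + t\<^sup>2 *\<^sub>R q" for t
    by (simp add: quad_map_add[OF sym] quad_map_homogeneous_scaleR matrix_vector_mult_scaleR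
        J_def q_def)
  have x1: "x1 = z + w *\<^sub>R d" and x2: "x2 = z + (- u) *\<^sub>R d"
    using uw by (simp_all add: z_def d_def algebra_simps flip: scaleR_add_left)
  have "u *\<^sub>R quad_map Q a x1 + w *\<^sub>R quad_map Q a x2
      = u *\<^sub>R (quad_map Q a z + w *\<^sub>R J + w\<^sup>2 *\<^sub>R q)
        + w *\<^sub>R (quad_map Q a z + (- u) *\<^sub>R J + (- u)\<^sup>2 *\<^sub>R q)"
    by (simp only: x1 x2 expand)
  also have "\<dots> = (u + w) *\<^sub>R quad_map Q a z + ((u + w) * (u * w)) *\<^sub>R q"
    by (simp add: algebra_simps power2_eq_square)
  finally show ?thesis using uw by (simp add: z_def d_def q_def)
qed

lemma norm_convex_combination_square:
  fixes x1 x2 :: "'a::real_inner"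
  assumes "u + w = 1"
  shows "(norm (u *\<^sub>R x1 + w *\<^sub>R x2))\<^sup>2
    = u * (norm x1)\<^sup>2 + w * (norm x2)\<^sup>2 - u * w * (norm (x1 - x2))\<^sup>2"
proof -
  have w: "w = 1 - u" using assms by simp
  show ?thesis
    unfolding power2_norm_eq_inner w
    by (simp add: inner_add_left inner_add_right inner_diff_left inner_diff_right
        inner_commute[of x2 x1] algebra_simps)
qed

section \<open>Convexity of the image of a small ball\<close>

lemma exists_small_step_size:
  fixes p q b c :: real
  assumes "0 < b" "0 < c"
  obtains t where "0 < t" "t < 1" "t * p < b" "t * q < c"
proof -
  have small: "\<forall>\<^sub>F t in at_right 0. t * r < e" if "0 < e" for r e :: real
    using order_tendstoD(2)[OF tendsto_mult_left_zero[OF tendsto_ident_at] that] by simp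
  have "\<forall>\<^sub>F t in at_right 0. 0 < t \<and> t * 1 < 1 \<and> t * p < b \<and> t * q < c"
    using eventually_at_right_less small[where r = 1 and e = 1] small[where r = p and e = b]
      small[where r = q and e = c] assms
    by (auto intro!: eventually_conj)
  then show ?thesis
    using that eventually_happens'[OF trivial_limit_at_right_real] by auto
qed

text \<open>\<open>transpose (quad_jacobian Q a 0)\<close> is the matrix \<open>A = [a\<^sub>1 \<dots> a\<^sub>m]\<close>.\<close>

locale quadratic_map_bounds =
  fixes Q :: "'m::finite \<Rightarrow> real^'n::finite^'n" and a :: "'m \<Rightarrow> real^'n" and L \<nu> :: real
  assumes symmetric: "\<And>i. symmetric_mat (Q i)"
    and L_pos: "0 < L"
    and Q_bound: "\<And>h. (\<Sum>i\<in>UNIV. (norm (Q i *v h))\<^sup>2) \<le> L\<^sup>2 * (norm h)\<^sup>2"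
    and linear_part_bound: "\<And>w. \<nu> * norm w \<le> norm (transpose (quad_jacobian Q a 0) *v w)"
begin

lemma norm_transpose_quad_jacobian_ge:
  "(\<nu> - L * norm x) * norm w \<le> norm (transpose (quad_jacobian Q a x) *v w)"
proof -
  define S where "S = (\<Sum>i\<in>UNIV. w $ i *\<^sub>R (Q i *v x))"
  have split: "transpose (quad_jacobian Q a 0) *v w = transpose (quad_jacobian Q a x) *v w - S"
    unfolding S_def transpose_quad_jacobian_mult by (simp add: scaleR_add_right sum.distrib)
  have "sqrt (\<Sum>i\<in>UNIV. (norm (Q i *v x))\<^sup>2) \<le> sqrt ((L * norm x)\<^sup>2)"
    using Q_bound[of x] by (simp add: power_mult_distrib)
  then have "norm S \<le> norm w * (L * norm x)"
    using norm_sum_scaleR_le[of w "\<lambda>i. Q i *v x"] L_pos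
    by (simp add: S_def) (meson mult_left_mono norm_ge_zero order_trans)
  moreover have "\<nu> * norm w \<le> norm (transpose (quad_jacobian Q a x) *v w) + norm S"
    using linear_part_bound[of w] norm_triangle_ineq4[of _ S] unfolding split by (rule order_trans)
  ultimately show ?thesis by (simp add: algebra_simps)
qed

lemma exists_descent_step:
  assumes x: "norm x < \<epsilon>" and ne: "quad_map Q a x \<noteq> y"
    and mu: "0 \<le> \<mu>" "\<mu> < \<nu> - L * norm x"
  obtains x' where "norm x' \<le> \<epsilon>"
    and "norm (quad_map Q a x' - y) + \<mu> * norm (x' - z) < norm (quad_map Q a x - y) + \<mu> * norm (x - z)"
proof -
  define r where "r = quad_map Q a x - y"
  obtain v where Jv: "quad_jacobian Q a x *v v = - r"
    and v: "(\<nu> - L * norm x) * norm v \<le> norm (- r)"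
    using bounded_right_inverse_if_transpose_bounded_below[OF _ norm_transpose_quad_jacobian_ge] mu
    by (metis le_less_trans)
  define R where "R = quad_map Q (\<lambda>_. 0) v"
  define \<delta> where "\<delta> = norm r - \<mu> * norm v"
  have "0 < \<delta>"
  proof (cases "v = 0")
    case True
    then show ?thesis using ne by (simp add: \<delta>_def r_def)
  next
    case False
    then have "\<mu> * norm v < (\<nu> - L * norm x) * norm v" using mu by simp
    then show ?thesis using v by (simp add: \<delta>_def)
  qed
  have step: "quad_map Q a (x + t *\<^sub>R v) - y = (1 - t) *\<^sub>R r + t\<^sup>2 *\<^sub>R R" for t
    by (simp add: quad_map_add[OF symmetric] quad_map_homogeneous_scaleR matrix_vector_mult_scaleR
        Jv R_def r_def algebra_simps)
  have decrease: "norm (quad_map Q a (x + t *\<^sub>R v) - y) + \<mu> * norm (x + t *\<^sub>R v - z)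
      \<le> norm r + \<mu> * norm (x - z) - t * (\<delta> - t * norm R)" if "0 \<le> t" "t \<le> 1" for t
  proof -
    have "norm (quad_map Q a (x + t *\<^sub>R v) - y) \<le> (1 - t) * norm r + t\<^sup>2 * norm R"
      unfolding step using norm_triangle_ineq[of "(1 - t) *\<^sub>R r" "t\<^sup>2 *\<^sub>R R"] that by simp
    moreover have "norm (x + t *\<^sub>R v - z) \<le> norm (x - z) + t * norm v"
      using norm_triangle_ineq[of "x - z" "t *\<^sub>R v"] that by (simp add: algebra_simps)
    then have "\<mu> * norm (x + t *\<^sub>R v - z) \<le> \<mu> * (norm (x - z) + t * norm v)"
      using mu(1) by (rule mult_left_mono)
    ultimately show ?thesis by (simp add: \<delta>_def algebra_simps power2_eq_square)
  qed
  obtain t where t: "0 < t" "t < 1" "t * norm v < \<epsilon> - norm x" "t * norm R < \<delta>"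
    using exists_small_step_size x \<open>0 < \<delta>\<close> by (metis diff_gt_0_iff_gt)
  show ?thesis
  proof (rule that)
    show "norm (x + t *\<^sub>R v) \<le> \<epsilon>"
      using norm_triangle_ineq[of x "t *\<^sub>R v"] t by simp
    show "norm (quad_map Q a (x + t *\<^sub>R v) - y) + \<mu> * norm (x + t *\<^sub>R v - z)
        < norm (quad_map Q a x - y) + \<mu> * norm (x - z)"
    proof -
      have "0 < t * (\<delta> - t * norm R)" using t by simp
      then show ?thesis using decrease[of t] t unfolding r_def by linarith
    qed
  qed
qed

lemma mem_image_cball_if_close:
  assumes z: "norm z \<le> \<epsilon>" and close: "norm (quad_map Q a z - y) < (\<nu> - L * \<epsilon>) * (\<epsilon> - norm z)"
  shows "y \<in> quad_map Q a ` cball 0 \<epsilon>"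
proof -
  define \<mu> where "\<mu> = \<nu> - L * \<epsilon>"
  have "0 < \<mu> * (\<epsilon> - norm z)" using close unfolding \<mu>_def by (meson norm_ge_zero le_less_trans)
  then have "0 < \<mu>" using z by (simp add: zero_less_mult_iff)
  define \<psi> where "\<psi> x = norm (quad_map Q a x - y) + \<mu> * norm (x - z)" for x
  have "continuous_on (cball 0 \<epsilon>) \<psi>"
    unfolding \<psi>_def by (intro continuous_intros continuous_on_quad_map)
  moreover have "z \<in> cball 0 \<epsilon>" using z by simp
  ultimately obtain x where x: "x \<in> cball 0 \<epsilon>" and min: "\<And>x'. x' \<in> cball 0 \<epsilon> \<Longrightarrow> \<psi> x \<le> \<psi> x'"
    using continuous_attains_inf[OF compact_cball] by blast
  text \<open>The penalty term keeps the minimiser away from the boundary sphere.\<close>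
  have "\<mu> * norm (x - z) \<le> \<psi> z"
    using min[OF \<open>z \<in> cball 0 \<epsilon>\<close>]
    by (simp add: \<psi>_def) (use norm_ge_zero[of "quad_map Q a x - y"] in linarith)
  also have "\<psi> z < \<mu> * (\<epsilon> - norm z)" using close by (simp add: \<psi>_def \<mu>_def)
  finally have "norm (x - z) < \<epsilon> - norm z" using \<open>0 < \<mu>\<close> by simp
  then have x_inner: "norm x < \<epsilon>"
    using norm_triangle_ineq[of z "x - z"] by simp
  have "quad_map Q a x = y"
  proof (rule ccontr)
    assume "quad_map Q a x \<noteq> y"
    moreover have "\<mu> < \<nu> - L * norm x" using L_pos x_inner by (simp add: \<mu>_def)
    ultimately obtain x' where "norm x' \<le> \<epsilon>" and "\<psi> x' < \<psi> x"
      using exists_descent_step[OF x_inner] \<open>0 < \<mu>\<close> unfolding \<psi>_def by (metis less_imp_le)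
    then show False using min[of x'] by simp
  qed
  then show ?thesis using x by blast
qed

lemma norm_quad_map_convex_combination_gap:
  assumes uw: "0 \<le> u" "0 \<le> w" "u + w = 1"
  shows "norm (quad_map Q a (u *\<^sub>R x1 + w *\<^sub>R x2) - (u *\<^sub>R quad_map Q a x1 + w *\<^sub>R quad_map Q a x2))
    \<le> L / 2 * (u * w * (norm (x1 - x2))\<^sup>2)"
proof -
  have "norm (quad_map Q a (u *\<^sub>R x1 + w *\<^sub>R x2) - (u *\<^sub>R quad_map Q a x1 + w *\<^sub>R quad_map Q a x2))
      = u * w * norm (quad_map Q (\<lambda>_. 0) (x1 - x2))"
    using uw by (simp add: quad_map_convex_combination[OF symmetric uw(3)])
  also have "\<dots> \<le> u * w * (L / 2 * (norm (x1 - x2))\<^sup>2)"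
    by (rule mult_left_mono[OF norm_quad_map_homogeneous_le[OF Q_bound]]) (use uw L_pos in simp_all)
  also have "\<dots> = L / 2 * (u * w * (norm (x1 - x2))\<^sup>2)"
    by (rule mult.left_commute)
  finally show ?thesis .
qed

lemma gap_lt_margin:
  assumes eps: "2 * L * \<epsilon> < \<nu>" and "0 \<le> \<epsilon>" "0 < k" and z_sq: "\<zeta>\<^sup>2 \<le> \<epsilon>\<^sup>2 - k" "0 \<le> \<zeta>"
  shows "L / 2 * k < (\<nu> - L * \<epsilon>) * (\<epsilon> - \<zeta>)"
proof -
  have "\<zeta>\<^sup>2 < \<epsilon>\<^sup>2" using z_sq \<open>0 < k\<close> by linarith
  then have "\<zeta> < \<epsilon>" using \<open>0 \<le> \<epsilon>\<close> by (rule power2_less_imp_less)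
  have "k \<le> (\<epsilon> - \<zeta>) * (\<epsilon> + \<zeta>)"
    using z_sq by (simp add: power2_eq_square algebra_simps)
  also have "\<dots> \<le> (\<epsilon> - \<zeta>) * (2 * \<epsilon>)"
    using \<open>\<zeta> < \<epsilon>\<close> by (simp add: mult_left_mono[of _ _ "\<epsilon> - \<zeta>"])
  finally have "k / 2 \<le> \<epsilon> * (\<epsilon> - \<zeta>)" by (simp add: algebra_simps)
  then have "L * (k / 2) \<le> L * (\<epsilon> * (\<epsilon> - \<zeta>))"
    using less_imp_le[OF L_pos] by (rule mult_left_mono)
  also have "\<dots> < (\<nu> - L * \<epsilon>) * (\<epsilon> - \<zeta>)"
    using eps \<open>\<zeta> < \<epsilon>\<close> by (simp add: mult.assoc[symmetric])
  finally show ?thesis by simp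
qed

lemma convex_image_cball:
  assumes eps: "2 * L * \<epsilon> < \<nu>"
  shows "convex (quad_map Q a ` cball 0 \<epsilon>)"
proof (rule convexI)
  fix y1 y2 and u w :: real
  assume "y1 \<in> quad_map Q a ` cball 0 \<epsilon>" "y2 \<in> quad_map Q a ` cball 0 \<epsilon>"
    and uw: "0 \<le> u" "0 \<le> w" "u + w = 1"
  then obtain x1 x2 where x1: "norm x1 \<le> \<epsilon>" "y1 = quad_map Q a x1"
    and x2: "norm x2 \<le> \<epsilon>" "y2 = quad_map Q a x2"
    by auto
  define z where "z = u *\<^sub>R x1 + w *\<^sub>R x2"
  define k where "k = u * w * (norm (x1 - x2))\<^sup>2"
  have "0 \<le> k" using uw by (simp add: k_def)
  have gap: "norm (quad_map Q a z - (u *\<^sub>R y1 + w *\<^sub>R y2)) \<le> L / 2 * k"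
    using norm_quad_map_convex_combination_gap[OF uw] by (simp add: x1 x2 z_def k_def)
  have "u * (norm x1)\<^sup>2 + w * (norm x2)\<^sup>2 \<le> u * \<epsilon>\<^sup>2 + w * \<epsilon>\<^sup>2"
    using x1(1) x2(1) uw by (intro add_mono mult_left_mono[of _ _ u] mult_left_mono[of _ _ w]
        power_mono) simp_all
  then have z_sq: "(norm z)\<^sup>2 \<le> \<epsilon>\<^sup>2 - k"
    using norm_convex_combination_square[OF uw(3), of x1 x2] uw(3)
    by (simp add: z_def k_def flip: distrib_right)
  have "0 \<le> \<epsilon>" using x1(1) norm_ge_zero[of x1] by linarith
  have "(norm z)\<^sup>2 \<le> \<epsilon>\<^sup>2" using z_sq \<open>0 \<le> k\<close> by linarith
  then have z_le: "norm z \<le> \<epsilon>" using \<open>0 \<le> \<epsilon>\<close> by (rule power2_le_imp_le)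
  show "u *\<^sub>R y1 + w *\<^sub>R y2 \<in> quad_map Q a ` cball 0 \<epsilon>"
  proof (cases "k = 0")
    case True
    then show ?thesis using gap z_le by force
  next
    case False
    then have "L / 2 * k < (\<nu> - L * \<epsilon>) * (\<epsilon> - norm z)"
      using gap_lt_margin[OF eps \<open>0 \<le> \<epsilon>\<close> _ z_sq] \<open>0 \<le> k\<close> by simp
    with gap have "norm (quad_map Q a z - (u *\<^sub>R y1 + w *\<^sub>R y2)) < (\<nu> - L * \<epsilon>) * (\<epsilon> - norm z)"
      by linarith
    with z_le show ?thesis by (rule mem_image_cball_if_close)
  qed
qed

end

theorem theorem2:
  fixes Q :: "'m::finite \<Rightarrow> real^'n::finite^'n"
    and a :: "'m \<Rightarrow> real^'n"
    and f :: "real^'n \<Rightarrow> real^'m"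
    and A :: "real^'m^'n"
    and L L_new \<nu> :: real
  assumes sym: "\<And>i. symmetric_mat (Q i)"
    and f_def: "\<And>x. f x = (\<chi> i. (1/2) * (x \<bullet> (Q i *v x)) + a i \<bullet> x)"
    and A_def: "A = (\<chi> j k. a k $ j)"
    and L_def: "L = sqrt (\<Sum>i\<in>UNIV. (spec_norm (Q i))\<^sup>2)"
    and Lnew_def: "L_new = sqrt (lambda_max (\<Sum>i\<in>UNIV. transpose (Q i) ** Q i))"
    and nu_def: "\<nu> = sigma_min A"
    and pos: "L_new > 0"
  shows "L_new \<le> L \<and>
         (\<forall>\<epsilon>::real. \<epsilon> < \<nu> / (2 * L_new) \<longrightarrow> convex {f x | x. norm x \<le> \<epsilon>})"
proof (intro conjI allI impI)
  show "L_new \<le> L"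
    unfolding Lnew_def L_def by (rule real_sqrt_le_mono[OF lambda_max_sum_transpose_mult_le])
  have "L_new\<^sup>2 = lambda_max (\<Sum>i\<in>UNIV. transpose (Q i) ** Q i)"
    using pos by (simp add: Lnew_def)
  then have "(\<Sum>i\<in>UNIV. (norm (Q i *v h))\<^sup>2) \<le> L_new\<^sup>2 * (norm h)\<^sup>2" for h
    by (simp add: sum_norm_mult_le_lambda_max)
  moreover have "transpose (quad_jacobian Q a 0) = A"
    by (simp add: A_def quad_jacobian_def transpose_def)
  then have "\<nu> * norm w \<le> norm (transpose (quad_jacobian Q a 0) *v w)" for w
    by (simp add: nu_def sigma_min_mult_le_norm)
  ultimately interpret quadratic_map_bounds Q a L_new \<nu>
    using sym pos by unfold_locales
  fix \<epsilon> :: real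
  assume "\<epsilon> < \<nu> / (2 * L_new)"
  then have "2 * L_new * \<epsilon> < \<nu>"
    using pos by (simp add: pos_less_divide_eq mult.commute)
  moreover have "{f x | x. norm x \<le> \<epsilon>} = quad_map Q a ` cball 0 \<epsilon>"
    by (auto simp: f_def quad_map_def)
  ultimately show "convex {f x | x. norm x \<le> \<epsilon>}"
    by (simp add: convex_image_cball)
qed

end
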